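(* Let $X$ be a Minkowski space whose closed unit ball has a proper face that is not a polytope. Then there exists an infinite M-set in $X$.
   Context: A Minkowski space is a finite-dimensional real normed space $(X,\|\cdot\|)$. For a set $S\subseteq X$, its midpoint set is $M(S)=\{\tfrac12(x+y): x,y\in S,\ x\neq y\}$. A set $S\subseteq X$ is an M-set if every vector in $M(S)$ has norm exactly $1$ and every vector in $S$ has norm strictly greater than $1$. *)

theory Defs
  imports "HOL-Analysis.Analysis"
begin

definition minkowski_space :: "'a::real_normed_vector itself \<Rightarrow> bool" where
  "minkowski_space _ \<longleftrightarrow> (\<exists>B::'a set. finite B \<and> span B = UNIV)"

definition midpoint_set :: "'a::real_normed_vector set \<Rightarrow> 'a set" where
  "midpoint_set S = {(1/2) *\<^sub>R (x + y) | x y. x \<in> S \<and> y \<in> S \<and> x \<noteq> y}"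

definition M_set :: "'a::real_normed_vector set \<Rightarrow> bool" where
  "M_set S \<longleftrightarrow> (\<forall>m \<in> midpoint_set S. norm m = 1) \<and> (\<forall>x \<in> S. norm x > 1)"

end

theory Submission
  imports Defs
begin

text \<open>
  We build an
  injective sequence \<open>X\<close> outside the unit ball whose pairwise midpoints all lie in \<open>F\<close>,
  hence on the unit sphere; its range is an infinite M-set.

  Finite dimensionality then enters through coordinates with respect to a basis (locale
  \<open>finite_basis\<close>): coordinates are bounded, closed bounded sets are compact, the coordinate
  inner product yields extreme points and separation, hence a compact convex set with finitely
  many extreme points is a polytope, and every nonempty convex set has a relative ball.

  For the theorem, a relative ball makes \<open>F\<close> closed, hence compact, so its infinitely many
  extreme points accumulate at some \<open>e \<in> F\<close>.  Reflecting \<open>e\<close> through nearby extreme points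
  gives points \<open>x \<notin> F\<close> arbitrarily close to \<open>e\<close> whose midpoint with \<open>e\<close> carries a relative
  ball in \<open>F\<close>; choosing them with rapidly shrinking distances to \<open>e\<close> puts every pairwise
  midpoint into one of these balls.
\<close>

lemma linear_argmax_face_of:
  fixes f :: "'a::real_vector \<Rightarrow> real"
  assumes f: "linear f" and "convex F" and "m \<in> F" and max: "\<And>y. y \<in> F \<Longrightarrow> f y \<le> f m"
  shows "{y \<in> F. f y = f m} face_of F"
proof -
  have comb: "f ((1 - u) *\<^sub>R a + u *\<^sub>R c) = (1 - u) * f a + u * f c" for u a c
    using linear_add[OF f] linear_scale[OF f] by simp
  have "{y \<in> F. f y = f m} = F \<inter> f -` {f m}" by auto
  then have "convex {y \<in> F. f y = f m}"
    using convex_Int[OF assms(2) convex_linear_vimage[OF f convex_singleton]] by simp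
  moreover have "a \<in> F \<and> f a = f m"
    if ac: "a \<in> F" "c \<in> F" and x: "x \<in> open_segment a c" "f x = f m" for a c x
  proof -
    obtain u where u: "0 < u" "u < 1" and xu: "x = (1 - u) *\<^sub>R a + u *\<^sub>R c"
      using x(1) by (auto simp: in_segment)
    have "(1 - u) * f a + u * f c = f m" using comb[of u a c] xu x(2) by simp
    moreover have "f m = (1 - u) * f m + u * f m" by (simp add: algebra_simps)
    moreover have "(1 - u) * f a \<le> (1 - u) * f m" "u * f c \<le> u * f m"
      using max ac u by simp_all
    ultimately have "(1 - u) * f a = (1 - u) * f m" by linarith
    then show ?thesis using u ac(1) by simp
  qed
  ultimately show ?thesis
    unfolding face_of_def using open_segment_commute by blast
qed

lemma convex_translate_sum_mem:
  fixes F :: "'a::real_vector set"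
  assumes "convex F" and "v0 \<in> F" and "finite U" and U: "\<And>u. u \<in> U \<Longrightarrow> v0 + u \<in> F"
    and t: "\<And>u. u \<in> U \<Longrightarrow> 0 \<le> t u" "sum t U \<le> 1"
  shows "v0 + (\<Sum>u\<in>U. t u *\<^sub>R u) \<in> F"
proof (cases "sum t U = 0")
  case True
  then have "\<forall>u\<in>U. t u = 0" using sum_nonneg_eq_0_iff[OF assms(3)] t(1) by blast
  then show ?thesis using assms(2) by simp
next
  case False
  define s where "s = sum t U"
  have "0 \<le> s" unfolding s_def using t(1) by (simp add: sum_nonneg)
  then have s: "0 < s" "s \<le> 1" using False t(2) unfolding s_def by linarith+
  have "(\<Sum>u\<in>U. (t u / s) *\<^sub>R (v0 + u)) \<in> F"
    using s t U by (intro convex_sum[OF assms(3,1)]) (auto simp: s_def sum_divide_distrib[symmetric])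
  moreover have "(\<Sum>u\<in>U. (t u / s) *\<^sub>R (v0 + u)) = v0 + (1 / s) *\<^sub>R (\<Sum>u\<in>U. t u *\<^sub>R u)"
    using s unfolding scaleR_add_right sum.distrib
    by (simp add: scaleR_sum_left[symmetric] scaleR_sum_right sum_divide_distrib[symmetric] s_def)
  ultimately have "(1 - s) *\<^sub>R v0 + s *\<^sub>R (v0 + (1 / s) *\<^sub>R (\<Sum>u\<in>U. t u *\<^sub>R u)) \<in> F"
    using convexD_alt[OF assms(1,2)] s by simp
  then show ?thesis using s by (simp add: algebra_simps)
qed

definition relball_in :: "'a::real_normed_vector set \<Rightarrow> 'a \<Rightarrow> real \<Rightarrow> 'a set \<Rightarrow> bool" where
  "relball_in A z r F \<longleftrightarrow> 0 < r \<and> (\<forall>y\<in>A. norm (y - z) < r \<longrightarrow> y \<in> F)"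

lemma relball_in_shrink:
  fixes F A :: "'a::real_normed_vector set"
  assumes "convex F" and "affine A" and "F \<subseteq> A" and "p \<in> F" and room: "relball_in A c r F"
    and l: "0 < l" "l \<le> 1"
  shows "relball_in A ((1 - l) *\<^sub>R p + l *\<^sub>R c) (l * r) F"
  unfolding relball_in_def
proof (intro conjI ballI impI)
  show "0 < l * r" using room l unfolding relball_in_def by simp
  fix y assume "y \<in> A" and close: "norm (y - ((1 - l) *\<^sub>R p + l *\<^sub>R c)) < l * r"
  define q where "q = (1 - 1 / l) *\<^sub>R p + (1 / l) *\<^sub>R y"
  have "q - c = (1 / l) *\<^sub>R (y - ((1 - l) *\<^sub>R p + l *\<^sub>R c))"
    unfolding q_def using l by (simp add: algebra_simps)
  then have "norm (q - c) = norm (y - ((1 - l) *\<^sub>R p + l *\<^sub>R c)) / l" using l by simp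
  also have "\<dots> < r" using close l by (simp add: divide_less_eq mult.commute)
  finally have "norm (q - c) < r" .
  moreover have "q \<in> A" unfolding q_def using assms(2,3,4) \<open>y \<in> A\<close> unfolding affine_alt by blast
  ultimately have "q \<in> F" using room unfolding relball_in_def by blast
  moreover have "y = (1 - l) *\<^sub>R p + l *\<^sub>R q" unfolding q_def using l by (simp add: algebra_simps)
  ultimately show "y \<in> F" using convexD_alt[OF assms(1,4)] l by simp
qed

lemma face_of_unit_ball_in_sphere:
  fixes F :: "'a::real_normed_vector set"
  assumes "F face_of cball 0 1" and "F \<noteq> cball 0 1" and "p \<in> F"
  shows "norm p = 1"
proof -
  have "ball 0 1 \<subseteq> interior (cball (0::'a) 1)"
    by (simp add: interior_maximal ball_subset_cball)
  then have "p \<notin> ball 0 1" using face_of_disjoint_interior[OF assms(1,2)] assms(3) by blast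
  moreover have "p \<in> cball 0 1" using face_of_imp_subset assms(1,3) by blast
  ultimately show ?thesis by simp
qed

text \<open>A face containing \<open>c\<close> contains each point \<open>l\<close> of the set whose extension
  \<open>(1 + t) c - t l\<close> beyond \<open>c\<close> also lies in the set, since \<open>c\<close> is between the two.\<close>
lemma face_of_extension:
  fixes S T :: "'a::real_vector set"
  assumes face: "T face_of S" and "c \<in> T" and "l \<in> S" and t: "t > 0"
    and ext: "(1 + t) *\<^sub>R c - t *\<^sub>R l \<in> S"
  shows "l \<in> T"
proof (cases "l = (1 + t) *\<^sub>R c - t *\<^sub>R l")
  case True
  then have "(1 + t) *\<^sub>R l = (1 + t) *\<^sub>R c" by (simp add: algebra_simps)
  then have "l = c" using t by simp
  then show ?thesis using \<open>c \<in> T\<close> by simp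
next
  case False
  define u where "u = 1 / (1 + t)"
  have u: "0 < u" "u < 1" "u * (1 + t) = 1" unfolding u_def using t by auto
  have u2: "1 - u = u * t" using u(3) by (simp add: algebra_simps)
  have "(1 - u) *\<^sub>R l + u *\<^sub>R ((1 + t) *\<^sub>R c - t *\<^sub>R l)
      = (u * t) *\<^sub>R l + (u * (1 + t)) *\<^sub>R c - (u * t) *\<^sub>R l"
    unfolding u2 by (simp add: algebra_simps)
  then have "c = (1 - u) *\<^sub>R l + u *\<^sub>R ((1 + t) *\<^sub>R c - t *\<^sub>R l)" using u(3) by simp
  then have "c \<in> open_segment l ((1 + t) *\<^sub>R c - t *\<^sub>R l)" using False u by (auto simp: in_segment)
  then show ?thesis using face_ofD[OF face _ \<open>l \<in> S\<close> ext \<open>c \<in> T\<close>] by blast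
qed

text \<open>The reflection of a point \<open>e\<close> of \<open>F\<close> through a different extreme point \<open>e'\<close> lies outside
  \<open>F\<close>: extreme points are one-point faces.\<close>
lemma reflect_extreme_point_outside:
  fixes F :: "'a::real_vector set"
  assumes "e' extreme_point_of F" and "e \<in> F" and "e \<noteq> e'"
  shows "2 *\<^sub>R e' - e \<notin> F"
proof
  assume "2 *\<^sub>R e' - e \<in> F"
  moreover have "{e'} face_of F" using assms(1) face_of_singleton by blast
  ultimately have "e \<in> {e'}" using face_of_extension[of "{e'}" F e' e 1] assms(2) by simp
  with assms(3) show False by simp
qed

text \<open>For
  \<open>x n \<longlonglongrightarrow> l\<close> in \<open>T\<close>, the points \<open>c + t(c - x n)\<close> stay in \<open>T\<close> for small \<open>t > 0\<close>; so \<open>c\<close> lies in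
  an open segment between \<open>l\<close> and a point of the set, and the face property puts \<open>l\<close> in \<open>T\<close>.\<close>
lemma closed_face_with_relball:
  fixes S T :: "'a::real_normed_vector set"
  assumes "closed S" and "bounded S" and face: "T face_of S"
    and "affine A" and "T \<subseteq> A" and "c \<in> T" and room: "relball_in A c r T"
  shows "closed T"
  unfolding closed_sequential_limits
proof (intro allI impI, elim conjE)
  fix x l assume xT: "\<forall>n. x n \<in> T" and lim: "x \<longlonglongrightarrow> l"
  have TS: "T \<subseteq> S" using face face_of_imp_subset by blast
  obtain R where R: "\<And>y. y \<in> S \<Longrightarrow> norm y \<le> R" using assms(2) bounded_iff by blast
  have r: "r > 0" using room relball_in_def by blast
  have "0 \<le> R" using R[of c] \<open>c \<in> T\<close> TS by (meson norm_ge_zero order_trans subsetD)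
  define t where "t = r / (2 * R + 1)"
  have t: "0 < t" "t * (2 * R) < r" unfolding t_def using r \<open>0 \<le> R\<close> by (auto simp: field_simps)
  define z where "z n = (1 + t) *\<^sub>R c - t *\<^sub>R x n" for n
  have "z n \<in> T" for n
  proof -
    have "(1 - (- t)) *\<^sub>R c + (- t) *\<^sub>R x n \<in> A"
      using \<open>affine A\<close> \<open>T \<subseteq> A\<close> \<open>c \<in> T\<close> xT unfolding affine_alt by blast
    then have "z n \<in> A" unfolding z_def by (simp add: algebra_simps)
    moreover have "norm (z n - c) < r"
    proof -
      have "z n - c = t *\<^sub>R (c - x n)" unfolding z_def by (simp add: algebra_simps)
      then have "norm (z n - c) = t * norm (c - x n)" using t by simp
      also have "\<dots> \<le> t * (norm c + norm (x n))" using t by (simp add: norm_triangle_ineq4)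
      also have "\<dots> \<le> t * (2 * R)"
      proof -
        have "c \<in> S" "x n \<in> S" using xT \<open>c \<in> T\<close> TS by auto
        then show ?thesis using R[of c] R[of "x n"] t by (intro mult_left_mono) auto
      qed
      finally show ?thesis using t by simp
    qed
    ultimately show ?thesis using room unfolding relball_in_def by blast
  qed
  define zl where "zl = (1 + t) *\<^sub>R c - t *\<^sub>R l"
  have lS: "l \<in> S" using \<open>closed S\<close> lim xT TS by (meson closed_sequentially subsetD)
  have "z \<longlonglongrightarrow> zl" unfolding z_def zl_def by (intro tendsto_intros lim)
  then have "zl \<in> S"
    using \<open>closed S\<close> \<open>\<And>n. z n \<in> T\<close> TS by (meson closed_sequentially subsetD)
  then show "l \<in> T" using face_of_extension[OF face \<open>c \<in> T\<close> lS t(1)] unfolding zl_def by blast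
qed

locale finite_basis =
  fixes B :: "'a::real_normed_vector set"
  assumes finite_B: "finite B" and independent_B: "independent B" and span_B: "span B = UNIV"
begin

lemma coord_expansion: "(\<Sum>b\<in>B. representation B x b *\<^sub>R b) = x"
  using sum_representation_eq[OF independent_B _ finite_B] span_B by simp

lemma coord_outside: "b \<notin> B \<Longrightarrow> representation B x b = 0"
  using representation_ne_zero by blast

lemma coord_add [simp]: "representation B (x + y) b = representation B x b + representation B y b"
  and coord_diff [simp]: "representation B (x - y) b = representation B x b - representation B y b"
  and coord_scaleR [simp]: "representation B (c *\<^sub>R x) b = c * representation B x b"
  using representation_add[OF independent_B, of y x] representation_diff[OF independent_B, of y x]
    representation_scale[OF independent_B, of x c] span_B by auto

lemma compact_coord_box:
  "compact (PiE UNIV (\<lambda>b. if b \<in> B then {-M..M} else {0}) :: ('a \<Rightarrow> real) set)"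
proof -
  have "compactin (product_topology (\<lambda>_. euclidean) UNIV)
          (PiE UNIV (\<lambda>b. if b \<in> B then {-M..M} else {0}) :: ('a \<Rightarrow> real) set)"
    unfolding compactin_PiE by auto
  then show ?thesis by (simp add: euclidean_product_topology)
qed

lemma coord_in_box:
  fixes t :: "'a \<Rightarrow> real"
  assumes "\<And>b. b \<in> B \<Longrightarrow> \<bar>t b\<bar> \<le> M" and "\<And>b. b \<notin> B \<Longrightarrow> t b = 0"
  shows "t \<in> PiE UNIV (\<lambda>b. if b \<in> B then {-M..M} else {0})"
proof (rule PiE_I)
  fix b
  show "t b \<in> (if b \<in> B then {-M..M} else {0})"
    using assms[of b] by (cases "b \<in> B") (simp_all add: abs_le_iff)
qed simp

lemma continuous_on_combination:
  "continuous_on S (\<lambda>t. \<Sum>b\<in>B. t b *\<^sub>R b :: 'a)"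
proof -
  have "\<And>b. continuous_on S (\<lambda>t::'a\<Rightarrow>real. t b)"
    by (rule continuous_on_subset[OF continuous_on_product_coordinates]) simp
  then show ?thesis by (intro continuous_on_sum continuous_on_scaleR continuous_on_const)
qed

text \<open>On the \<open>\<ell>\<^sub>1\<close>-unit sphere of coefficient vectors supported on \<open>B\<close> (a compact set) the norm
  of the corresponding combination is continuous and, by independence, positive; hence it is
  bounded below by some \<open>m > 0\<close>.\<close>
lemma combination_norm_lower_bound:
  "\<exists>m>0. \<forall>t. (\<forall>b. b \<notin> B \<longrightarrow> t b = 0) \<longrightarrow> (\<Sum>b\<in>B. \<bar>t b\<bar>) = 1 \<longrightarrow> m \<le> norm (\<Sum>b\<in>B. t b *\<^sub>R b)"
proof -
  define Sph where "Sph = PiE UNIV (\<lambda>b. if b \<in> B then {-1..1} else {0::real})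
                            \<inter> {t. (\<Sum>b\<in>B. \<bar>t b\<bar>) = 1}"
  define g where "g t = norm (\<Sum>b\<in>B. t b *\<^sub>R b)" for t :: "'a \<Rightarrow> real"
  have in_Sph: "t \<in> Sph" if supp: "\<forall>b. b \<notin> B \<longrightarrow> t b = 0" and one: "(\<Sum>b\<in>B. \<bar>t b\<bar>) = 1" for t
  proof -
    have bound: "\<bar>t b\<bar> \<le> 1" if "b \<in> B" for b
      using member_le_sum[of b B "\<lambda>b. \<bar>t b\<bar>"] that finite_B one by simp
    show ?thesis unfolding Sph_def using supp one bound by (intro IntI coord_in_box) auto
  qed
  show ?thesis
  proof (cases "Sph = {}")
    case True
    show ?thesis
    proof (intro exI[of _ "1::real"] conjI allI impI)
      fix t :: "'a \<Rightarrow> real"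
      assume "\<forall>b. b \<notin> B \<longrightarrow> t b = 0" "(\<Sum>b\<in>B. \<bar>t b\<bar>) = 1"
      then show "1 \<le> norm (\<Sum>b\<in>B. t b *\<^sub>R b)" using in_Sph True by blast
    qed simp
  next
    case False
    have "closed {t::'a\<Rightarrow>real. (\<Sum>b\<in>B. \<bar>t b\<bar>) = 1}"
    proof (rule closed_Collect_eq)
      have "\<And>b. continuous_on UNIV (\<lambda>t::'a\<Rightarrow>real. t b)" by simp
      then show "continuous_on UNIV (\<lambda>t::'a\<Rightarrow>real. (\<Sum>b\<in>B. \<bar>t b\<bar>))"
        by (intro continuous_on_sum continuous_on_rabs) auto
    qed simp
    then have "compact Sph" unfolding Sph_def using compact_coord_box by (intro compact_Int_closed)
    moreover have "continuous_on Sph g"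
      unfolding g_def by (intro continuous_on_norm continuous_on_combination)
    ultimately obtain s where sS: "s \<in> Sph" and smin: "\<And>t. t \<in> Sph \<Longrightarrow> g s \<le> g t"
      using continuous_attains_inf[OF _ False] by blast
    have "g s > 0"
    proof (rule ccontr)
      assume "\<not> g s > 0"
      then have "(\<Sum>b\<in>B. s b *\<^sub>R b) = 0" unfolding g_def by simp
      then have "\<forall>b\<in>B. s b = 0" using independent_B finite_B dependent_finite by blast
      with sS show False unfolding Sph_def by simp
    qed
    moreover have "g s \<le> norm (\<Sum>b\<in>B. t b *\<^sub>R b)"
      if "\<forall>b. b \<notin> B \<longrightarrow> t b = 0" "(\<Sum>b\<in>B. \<bar>t b\<bar>) = 1" for t
      using smin[OF in_Sph[OF that]] unfolding g_def .
    ultimately show ?thesis by blast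
  qed
qed

text \<open>Coordinates are dominated by the norm: normalising the coordinate vector of \<open>x\<close> to
  \<open>\<ell>\<^sub>1\<close>-norm one gives \<open>\<Sum>\<^sub>b \<bar>x\<^sub>b\<bar> \<le> norm x / m\<close>.\<close>
lemma coord_bound: "\<exists>C>0. \<forall>x b. \<bar>representation B x b\<bar> \<le> C * norm x"
proof -
  obtain m where m: "m > 0" and lower: "\<And>t. \<forall>b. b \<notin> B \<longrightarrow> t b = 0 \<Longrightarrow>
      (\<Sum>b\<in>B. \<bar>t b\<bar>) = 1 \<Longrightarrow> m \<le> norm (\<Sum>b\<in>B. t b *\<^sub>R b)"
    using combination_norm_lower_bound by blast
  have "\<bar>representation B x b\<bar> \<le> (1 / m) * norm x" for x b
  proof -
    define r where "r = representation B x"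
    define l where "l = (\<Sum>b\<in>B. \<bar>r b\<bar>)"
    have rl: "\<bar>r b\<bar> \<le> l" for b
      using finite_B coord_outside[of b x] unfolding l_def r_def
      by (cases "b \<in> B") (auto intro: member_le_sum simp: sum_nonneg)
    show ?thesis
    proof (cases "l = 0")
      case True
      then show ?thesis using rl[of b] m unfolding r_def by simp
    next
      case False
      then have lpos: "l > 0" using rl[of b] by linarith
      have "(\<Sum>b\<in>B. (r b / l) *\<^sub>R b) = inverse l *\<^sub>R (\<Sum>b\<in>B. r b *\<^sub>R b)"
        unfolding scaleR_sum_right by (simp add: divide_inverse mult.commute)
      also have "\<dots> = inverse l *\<^sub>R x" unfolding r_def coord_expansion ..
      finally have "m \<le> norm (inverse l *\<^sub>R x)"
        using lower[of "\<lambda>b. r b / l"] lpos coord_outside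
        by (simp add: r_def l_def abs_div sum_divide_distrib[symmetric])
      then have "l \<le> norm x / m" using lpos m by (simp add: field_simps)
      then show ?thesis using rl[of b] unfolding r_def by simp
    qed
  qed
  then show ?thesis using m by (intro exI[of _ "1 / m"]) auto
qed

lemma bounded_linear_coord: "bounded_linear (\<lambda>x. representation B x b)"
proof -
  obtain C where "\<And>x b. \<bar>representation B x b\<bar> \<le> C * norm x"
    using coord_bound by blast
  then show ?thesis
    by (intro bounded_linear_intro[where K = C]) (auto simp: mult.commute)
qed

lemma continuous_on_coord: "continuous_on (S :: 'a set) (\<lambda>x. representation B x b)"
  using bounded_linear_coord linear_continuous_on by blast

text \<open>Heine--Borel: a closed bounded set is compact, being a closed subset of the image of a
  compact box of coefficient vectors.\<close>
lemma compact_if_bounded_closed: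
  fixes S :: "'a set"
  assumes "bounded S" and "closed S"
  shows "compact S"
proof -
  obtain C where C: "C > 0" "\<And>x b. \<bar>representation B x b\<bar> \<le> C * norm x"
    using coord_bound by blast
  obtain R where R: "\<And>x. x \<in> S \<Longrightarrow> norm x \<le> R" using assms(1) bounded_iff by blast
  define Box where "Box = PiE UNIV (\<lambda>b. if b \<in> B then {-(C * R)..C * R} else {0::real})"
  define L where "L t = (\<Sum>b\<in>B. t b *\<^sub>R b)" for t :: "'a \<Rightarrow> real"
  have "compact (L ` Box)"
    unfolding Box_def L_def
    by (intro compact_continuous_image compact_coord_box continuous_on_combination)
  moreover have "S \<subseteq> L ` Box"
  proof
    fix x assume "x \<in> S"
    then have "\<bar>representation B x b\<bar> \<le> C * R" for b
      using C R[of x] by (meson mult_left_mono less_imp_le order_trans)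
    then have "representation B x \<in> Box"
      unfolding Box_def using coord_outside by (intro coord_in_box) auto
    moreover have "x = L (representation B x)" unfolding L_def by (simp add: coord_expansion)
    ultimately show "x \<in> L ` Box" by blast
  qed
  ultimately show ?thesis using compact_Int_closed[of "L ` Box" S] assms(2)
    by (simp add: Int_absorb1)
qed

text \<open>The inner product making \<open>B\<close> orthonormal.  It supplies the strictly convex
  quadratic form and the nearest-point projections used below.\<close>
definition coord_inner :: "'a \<Rightarrow> 'a \<Rightarrow> real" where
  "coord_inner x y = (\<Sum>b\<in>B. representation B x b * representation B y b)"

lemma coord_inner_commute: "coord_inner x y = coord_inner y x"
  unfolding coord_inner_def by (simp add: mult.commute)

lemma coord_inner_diff_right: "coord_inner x (y - z) = coord_inner x y - coord_inner x z"
  and coord_inner_add_right: "coord_inner x (y + z) = coord_inner x y + coord_inner x z"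
  and coord_inner_scaleR_right: "coord_inner x (c *\<^sub>R y) = c * coord_inner x y"
  unfolding coord_inner_def
  by (simp_all add: algebra_simps sum_subtractf sum.distrib sum_distrib_left)

lemma coord_inner_diff_left: "coord_inner (y - z) x = coord_inner y x - coord_inner z x"
  and coord_inner_add_left: "coord_inner (y + z) x = coord_inner y x + coord_inner z x"
  and coord_inner_scaleR_left: "coord_inner (c *\<^sub>R y) x = c * coord_inner y x"
  by (simp_all only: coord_inner_commute[of _ x] coord_inner_diff_right
      coord_inner_add_right coord_inner_scaleR_right)

lemmas coord_inner_simps = coord_inner_diff_right coord_inner_add_right coord_inner_scaleR_right
  coord_inner_diff_left coord_inner_add_left coord_inner_scaleR_left

lemma linear_coord_inner: "linear (coord_inner w)"
  by (intro linearI) (simp_all add: coord_inner_simps)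

lemma coord_inner_pos:
  assumes "x \<noteq> 0"
  shows "coord_inner x x > 0"
proof -
  have "coord_inner x x \<noteq> 0"
  proof
    assume "coord_inner x x = 0"
    then have "\<forall>b\<in>B. representation B x b * representation B x b = 0"
      unfolding coord_inner_def using finite_B by (subst sum_nonneg_eq_0_iff[symmetric]) auto
    then have "(\<Sum>b\<in>B. representation B x b *\<^sub>R b) = 0" by simp
    with assms show False by (simp add: coord_expansion)
  qed
  moreover have "coord_inner x x \<ge> 0" unfolding coord_inner_def by (intro sum_nonneg) simp
  ultimately show ?thesis by simp
qed

lemma continuous_on_coord_inner:
  assumes "continuous_on S f" and "continuous_on S g"
  shows "continuous_on S (\<lambda>x. coord_inner (f x) (g x))"
  unfolding coord_inner_def
  by (intro continuous_on_sum continuous_on_mult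
      continuous_on_compose2[OF continuous_on_coord assms(1)]
      continuous_on_compose2[OF continuous_on_coord assms(2)]) auto

text \<open>Every nonempty compact set has an extreme point: a maximiser of the strictly convex
  function \<open>x \<mapsto> coord_inner x x\<close>.\<close>
lemma extreme_point_exists:
  fixes G :: "'a set"
  assumes "compact G" and "G \<noteq> {}"
  shows "\<exists>g. g extreme_point_of G"
proof -
  have "continuous_on G (\<lambda>x. coord_inner x x)"
    by (intro continuous_on_coord_inner continuous_on_id)
  then obtain g where gG: "g \<in> G" and gmax: "\<And>y. y \<in> G \<Longrightarrow> coord_inner y y \<le> coord_inner g g"
    using continuous_attains_sup[OF assms] by blast
  have "g extreme_point_of G"
    unfolding extreme_point_of_def
  proof (intro conjI gG ballI notI)
    fix a c assume aG: "a \<in> G" and cG: "c \<in> G" and "g \<in> open_segment a c"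
    then obtain u where ac: "a \<noteq> c" and u: "0 < u" "u < 1" and gu: "g = (1 - u) *\<^sub>R a + u *\<^sub>R c"
      by (auto simp: in_segment)
    have "coord_inner g g = (1 - u) * coord_inner a a + u * coord_inner c c
            - u * (1 - u) * coord_inner (a - c) (a - c)"
      unfolding gu by (simp add: coord_inner_simps coord_inner_commute[of c a] algebra_simps)
    moreover have "coord_inner (a - c) (a - c) > 0" using ac coord_inner_pos by simp
    moreover have "(1 - u) * coord_inner a a \<le> (1 - u) * coord_inner g g"
      and "u * coord_inner c c \<le> u * coord_inner g g"
      using gmax[OF aG] gmax[OF cG] u by simp_all
    moreover have "u * (1 - u) > 0" using u by simp
    ultimately have "coord_inner g g < (1 - u) * coord_inner g g + u * coord_inner g g"
      by (smt (verit) mult_pos_pos)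
    then show False by (simp add: algebra_simps)
  qed
  then show ?thesis by blast
qed

text \<open>Strict separation of a point from a compact convex set by a linear functional,
  namely \<open>coord_inner (z - p)\<close> for the point \<open>p\<close> of the set nearest to \<open>z\<close>.\<close>
lemma separate_point_compact_convex:
  fixes P :: "'a set"
  assumes "compact P" and "convex P" and "z \<notin> P"
  shows "\<exists>w. \<forall>y\<in>P. coord_inner w y < coord_inner w z"
proof (cases "P = {}")
  case True
  then show ?thesis by simp
next
  case False
  let ?q = "\<lambda>y. coord_inner (z - y) (z - y)"
  have "continuous_on P ?q"
    by (intro continuous_on_coord_inner continuous_intros)
  then obtain p where pP: "p \<in> P" and pmin: "\<And>y. y \<in> P \<Longrightarrow> ?q p \<le> ?q y"
    using continuous_attains_inf[OF assms(1) False] by blast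
  define w where "w = z - p"
  have w0: "w \<noteq> 0" using assms(3) pP w_def by auto
  have "coord_inner w y \<le> coord_inner w p" if yP: "y \<in> P" for y
  proof (rule ccontr)
    assume neg: "\<not> ?thesis"
    define v where "v = y - p"
    have pos: "coord_inner w v > 0"
      using neg unfolding v_def by (simp add: coord_inner_diff_right)
    then have "v \<noteq> 0" by (auto simp: coord_inner_def representation_zero)
    then have qv: "coord_inner v v > 0" by (rule coord_inner_pos)
    define t where "t = min 1 (coord_inner w v / coord_inner v v)"
    have t: "0 < t" "t \<le> 1" unfolding t_def using pos qv by auto
    have tq: "t * coord_inner v v \<le> coord_inner w v"
      unfolding t_def using qv by (simp add: min_def divide_le_eq mult.commute)
    have "(1 - t) *\<^sub>R p + t *\<^sub>R y \<in> P" using convexD_alt[OF assms(2) pP yP] t by simp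
    then have "?q p \<le> ?q ((1 - t) *\<^sub>R p + t *\<^sub>R y)" by (rule pmin)
    also have "z - ((1 - t) *\<^sub>R p + t *\<^sub>R y) = w - t *\<^sub>R v"
      unfolding w_def v_def by (simp add: algebra_simps)
    finally have "coord_inner w w \<le> coord_inner w w - 2 * t * coord_inner w v + t * t * coord_inner v v"
      unfolding w_def[symmetric]
      by (simp add: coord_inner_simps coord_inner_commute[of v w] algebra_simps)
    then have "2 * coord_inner w v \<le> t * coord_inner v v" using t
      by (simp add: algebra_simps)
    then show False using tq pos by simp
  qed
  moreover have "coord_inner w z - coord_inner w p = coord_inner w w"
    unfolding w_def by (simp add: coord_inner_diff_right)
  ultimately show ?thesis using coord_inner_pos[OF w0] by (intro exI[of _ w]) force
qed

text \<open>A point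
  outside the hull is separated from it by a linear functional; the face where that functional
  is maximal on the set has an extreme point, which is an extreme point of the set lying beyond
  the hull, a contradiction.\<close>
lemma polytope_if_finite_extreme_points:
  fixes F :: "'a set"
  assumes "compact F" and "convex F" and fin: "finite {x. x extreme_point_of F}"
  shows "polytope F"
proof -
  define E where "E = {x. x extreme_point_of F}"
  have "E \<subseteq> F" unfolding E_def extreme_point_of_def by auto
  then have hull_sub: "convex hull E \<subseteq> F" using assms(2) by (simp add: hull_minimal)
  have "F \<subseteq> convex hull E"
  proof
    fix z assume zF: "z \<in> F"
    show "z \<in> convex hull E"
    proof (rule ccontr)
      assume "z \<notin> convex hull E"
      moreover have "compact (convex hull E)"
        using fin E_def finite_imp_compact_convex_hull by blast
      ultimately obtain w where sep: "\<And>y. y \<in> convex hull E \<Longrightarrow> coord_inner w y < coord_inner w z"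
        using separate_point_compact_convex[of "convex hull E" z] by auto
      define f where "f = coord_inner w"
      have "continuous_on F f" and "continuous_on UNIV f"
        unfolding f_def by (intro continuous_on_coord_inner continuous_intros)+
      then obtain m where mF: "m \<in> F" and mmax: "\<And>y. y \<in> F \<Longrightarrow> f y \<le> f m"
        using continuous_attains_sup[OF assms(1)] zF by blast
      define G where "G = {y \<in> F. f y = f m}"
      have face: "G face_of F"
        unfolding G_def f_def using linear_argmax_face_of[OF linear_coord_inner assms(2) mF] mmax f_def by simp
      have "compact G"
        unfolding G_def using compact_Int_closed[OF assms(1) closed_Collect_eq[OF \<open>continuous_on UNIV f\<close>]]
        by (simp add: Collect_conj_eq)
      then obtain g where "g extreme_point_of G"
        using extreme_point_exists mF G_def by blast
      then have "g extreme_point_of F" and gG: "g \<in> G"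
        using extreme_point_of_face[OF face] by auto
      then have "g \<in> convex hull E" unfolding E_def by (simp add: hull_inc)
      then have "f g < f z" unfolding f_def by (rule sep)
      moreover have "f z \<le> f g" using mmax[OF zF] gG unfolding G_def by simp
      ultimately show False by simp
    qed
  qed
  then have "F = convex hull E" using hull_sub by (rule subset_antisym)
  moreover have "finite E" using fin unfolding E_def .
  ultimately show ?thesis unfolding polytope_def by blast
qed

lemma finite_if_independent: "independent (U :: 'a set) \<Longrightarrow> finite U"
  using independent_span_bound[OF finite_B, of U] span_B by simp

text \<open>Coordinates with respect to any independent set \<open>U\<close> are bounded on \<open>span U\<close>: they
  agree there with coordinates for a basis extending \<open>U\<close>.\<close>
lemma span_coord_bound:
  fixes U :: "'a set"
  assumes indU: "independent U"
  shows "\<exists>C>0. \<forall>x\<in>span U. \<forall>u. \<bar>representation U x u\<bar> \<le> C * norm x"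
proof -
  define Bx where "Bx = extend_basis U"
  interpret Bx: finite_basis Bx
  proof
    show "independent Bx" "span Bx = UNIV"
      unfolding Bx_def using independent_extend_basis[OF indU] span_extend_basis[OF indU] by auto
    then show "finite Bx" by (simp add: finite_if_independent)
  qed
  have UBx: "U \<subseteq> Bx" unfolding Bx_def using extend_basis_superset[OF indU] .
  obtain C where C: "C > 0" "\<And>x u. \<bar>representation Bx x u\<bar> \<le> C * norm x"
    using Bx.coord_bound by blast
  show ?thesis
  proof (intro exI[of _ C] conjI ballI allI)
    fix x u assume "x \<in> span U"
    then show "\<bar>representation U x u\<bar> \<le> C * norm x"
      using C(2)[of x u] representation_extend[OF Bx.independent_B _ UBx] by simp
  qed (use C in simp)
qed

text \<open>If \<open>v0\<close> and \<open>v0 + u\<close> (\<open>u \<in> U\<close>, \<open>U\<close> independent)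
  lie in the convex set \<open>F\<close>, the barycentre \<open>c\<close> has a ball relative to \<open>v0 + span U\<close> inside
  \<open>F\<close>: points near \<open>c\<close> have \<open>U\<close>-coordinates near those of \<open>c\<close>, so they remain convex
  combinations of \<open>v0\<close> and the \<open>v0 + u\<close>.\<close>
lemma simplex_relball:
  fixes F U :: "'a set"
  assumes cvx: "convex F" and v0: "v0 \<in> F" and indU: "independent U"
    and uF: "\<And>u. u \<in> U \<Longrightarrow> v0 + u \<in> F"
  shows "\<exists>c r. c \<in> F \<and> relball_in {y. y - v0 \<in> span U} c r F"
proof -
  have finU: "finite U" using indU by (rule finite_if_independent)
  obtain C where C: "C > 0" "\<And>x u. x \<in> span U \<Longrightarrow> \<bar>representation U x u\<bar> \<le> C * norm x"
    using span_coord_bound[OF indU] by blast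
  define k where "k = real (card U)"
  define a where "a = 1 / (k + 1)"
  have k0: "k \<ge> 0" unfolding k_def by simp
  have ak: "a * (k + 1) = 1" unfolding a_def using k0 by simp
  have a01: "0 < a" "a \<le> 1" unfolding a_def using k0 by simp_all
  have a: "0 < a" "a \<le> 1" "k * a = 1 - a" using ak a01 by (simp_all add: algebra_simps)
  define c where "c = v0 + (\<Sum>u\<in>U. a *\<^sub>R u)"
  have cF: "c \<in> F" unfolding c_def
    using convex_translate_sum_mem[OF cvx v0 finU uF, of "\<lambda>_. a"] a k_def by simp
  have "(\<Sum>u\<in>U. a *\<^sub>R u) \<in> span U" by (intro span_sum span_scale span_base)
  then have cU: "c - v0 \<in> span U" unfolding c_def by simp
  have coord_c: "representation U (c - v0) = (\<lambda>b. if b \<in> U then a else 0)"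
  proof (rule representation_eqI[OF indU cU])
    have e: "{b. (if b \<in> U then a else 0) \<noteq> 0} = U" using a by auto
    show "finite {b. (if b \<in> U then a else 0) \<noteq> 0}" using e finU by simp
    show "(\<Sum>b | (if b \<in> U then a else 0) \<noteq> 0. (if b \<in> U then a else 0) *\<^sub>R b) = c - v0"
      unfolding e c_def by simp
  qed (simp split: if_splits)
  have "relball_in {y. y - v0 \<in> span U} c (a * a / C) F"
    unfolding relball_in_def
  proof (intro conjI ballI impI)
    show "0 < a * a / C" using a C by simp
    fix y assume "y \<in> {y. y - v0 \<in> span U}" and close: "norm (y - c) < a * a / C"
    then have yU: "y - v0 \<in> span U" by simp
    define r where "r = representation U (y - v0)"
    have yr: "y = v0 + (\<Sum>u\<in>U. r u *\<^sub>R u)"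
      using sum_representation_eq[OF indU yU finU order_refl] unfolding r_def by simp
    have r_near: "\<bar>r u - a\<bar> \<le> a * a" if "u \<in> U" for u
    proof -
      have "y - c = (y - v0) - (c - v0)" by simp
      then have "r u - a = representation U (y - c) u"
        using representation_diff[OF indU cU yU] coord_c that unfolding r_def by simp
      also have "\<bar>\<dots>\<bar> \<le> C * norm (y - c)" using C(2) span_diff[OF yU cU] by simp
      also have "\<dots> \<le> a * a" using close C(1) by (simp add: field_simps)
      finally show ?thesis .
    qed
    have "a * a \<le> a" using mult_left_mono[of a 1 a] a by simp
    then have "0 \<le> r u" if "u \<in> U" for u
      using abs_le_D2[OF r_near[OF that]] by linarith
    moreover have "sum r U \<le> 1"
    proof -
      have "r u \<le> a + a * a" if "u \<in> U" for u using abs_le_D1[OF r_near[OF that]] by simp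
      then have "sum r U \<le> (\<Sum>u\<in>U. a + a * a)" by (intro sum_mono)
      also have "\<dots> = (k * a) * (1 + a)" unfolding k_def by (simp add: algebra_simps)
      also have "\<dots> = (1 - a) * (1 + a)" using a(3) by simp
      also have "\<dots> = 1 - a * a" by (simp add: algebra_simps)
      finally show ?thesis using mult_nonneg_nonneg[of a a] a(1) by linarith
    qed
    ultimately show "y \<in> F"
      unfolding yr using convex_translate_sum_mem[OF cvx v0 finU uF] by blast
  qed
  then show ?thesis using cF by blast
qed

text \<open>Every nonempty convex set \<open>F\<close> has a relative interior point: apply the previous lemma to
  a base point \<open>v0 \<in> F\<close> and a maximal independent subset \<open>U\<close> of \<open>F - v0\<close>, for which
  \<open>F \<subseteq> v0 + span U\<close>.\<close>
lemma relative_interior_ball_exists: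
  fixes F :: "'a set"
  assumes cvx: "convex F" and "F \<noteq> {}"
  shows "\<exists>A c r. affine A \<and> F \<subseteq> A \<and> c \<in> F \<and> relball_in A c r F"
proof -
  obtain v0 where v0: "v0 \<in> F" using assms(2) by blast
  obtain U where UF: "U \<subseteq> (\<lambda>v. v - v0) ` F" and indU: "independent U"
    and FU: "(\<lambda>v. v - v0) ` F \<subseteq> span U"
    using maximal_independent_subset by blast
  define A where "A = {y. y - v0 \<in> span U}"
  have affA: "affine A"
    unfolding affine_alt A_def
  proof (intro ballI allI, simp)
    fix a b u assume "a - v0 \<in> span U" "b - v0 \<in> span U"
    then have "(1 - u) *\<^sub>R (a - v0) + u *\<^sub>R (b - v0) \<in> span U"
      by (intro span_add span_scale)
    then show "(1 - u) *\<^sub>R a + u *\<^sub>R b - v0 \<in> span U" by (simp add: algebra_simps)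
  qed
  have FA: "F \<subseteq> A" using FU unfolding A_def by auto
  have "v0 + u \<in> F" if "u \<in> U" for u using UF that by auto
  then obtain c r where "c \<in> F" "relball_in A c r F"
    unfolding A_def using simplex_relball[OF cvx v0 indU] by blast
  then show ?thesis using affA FA by blast
qed

end

lemma minkowski_space_finite_basis:
  assumes "minkowski_space TYPE('a::real_normed_vector)"
  shows "\<exists>B::'a set. finite_basis B"
proof -
  obtain B0 :: "'a set" where "finite B0" and B0: "span B0 = UNIV"
    using assms unfolding minkowski_space_def by blast
  obtain B where "B \<subseteq> B0" and "independent B" and "B0 \<subseteq> span B"
    using maximal_independent_subset by blast
  have "finite B" using \<open>B \<subseteq> B0\<close> \<open>finite B0\<close> by (rule finite_subset)
  moreover have "span B = UNIV"
    using span_minimal[OF \<open>B0 \<subseteq> span B\<close> subspace_span] B0 by blast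
  ultimately have "finite_basis B" using \<open>independent B\<close> by unfold_locales
  then show ?thesis ..
qed

text \<open>For an extreme point \<open>e'\<close>
  near \<open>e\<close>, the reflection \<open>p = 2e' - e\<close> is outside the closed set \<open>F\<close>; moving \<open>e'\<close> slightly towards the
  relative interior point \<open>c\<close> gives \<open>w\<close> with a relative ball inside \<open>F\<close>, and \<open>x = 2w - e\<close>
  is close to \<open>p\<close> (so outside \<open>F\<close>) and close to \<open>e\<close>, with midpoint \<open>w\<close>.\<close>
lemma exists_partner_near:
  fixes F A :: "'a::real_normed_vector set"
  assumes "convex F" and "closed F" and "affine A" and "F \<subseteq> A"
    and "c \<in> F" and room: "relball_in A c r F" and "e \<in> F"
    and e: "e islimpt {x. x extreme_point_of F}" and "d > 0"
  shows "\<exists>x s. x \<in> A \<and> norm (x - e) < d \<and> x \<notin> F \<and> relball_in A ((1/2) *\<^sub>R (e + x)) s F"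
proof -
  obtain e' where ext: "e' extreme_point_of F" and "e' \<noteq> e" and near: "dist e' e < d / 4"
    using e \<open>d > 0\<close> unfolding islimpt_approachable by (metis divide_pos_pos mem_Collect_eq zero_less_numeral)
  have e'F: "e' \<in> F" using ext extreme_point_of_def by blast
  define p where "p = 2 *\<^sub>R e' - e"
  have "p \<notin> F" unfolding p_def using reflect_extreme_point_outside ext \<open>e \<in> F\<close> \<open>e' \<noteq> e\<close> by metis
  moreover have "open (- F)" using \<open>closed F\<close> by (simp add: open_Compl)
  ultimately obtain \<eta> where \<eta>: "\<eta> > 0" "ball p \<eta> \<subseteq> - F"
    using open_contains_ball by blast
  define K where "K = 2 * (norm (c - e') + 1)"
  define l where "l = min (1/2) (min \<eta> (d/2)) / K"
  have K: "K \<ge> 2" unfolding K_def by simp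
  have l: "0 < l" "l \<le> 1" unfolding l_def using \<eta> \<open>d > 0\<close> K by (auto simp: field_simps)
  have lK: "2 * l * norm (c - e') < min \<eta> (d/2)"
  proof -
    have "2 * l * norm (c - e') < l * K" unfolding K_def using l by simp
    also have "l * K = min (1/2) (min \<eta> (d/2))" unfolding l_def using K by simp
    also have "\<dots> \<le> min \<eta> (d/2)" by (rule min.cobounded2)
    finally show ?thesis .
  qed
  define w where "w = (1 - l) *\<^sub>R e' + l *\<^sub>R c"
  define x where "x = 2 *\<^sub>R w - e"
  have "w \<in> A" unfolding w_def using assms(3,4) e'F \<open>c \<in> F\<close> unfolding affine_alt by blast
  then have "(1 - 2) *\<^sub>R e + 2 *\<^sub>R w \<in> A" using assms(3,4) \<open>e \<in> F\<close> unfolding affine_alt by blast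
  then have "x \<in> A" unfolding x_def by (simp add: algebra_simps)
  have xp: "x - p = (2 * l) *\<^sub>R (c - e')" unfolding x_def w_def p_def by (simp add: algebra_simps)
  have "dist p x < \<eta>" using lK l unfolding dist_norm norm_minus_commute[of p] xp by simp
  then have "x \<notin> F" using \<eta>(2) by auto
  have "norm (x - e) < d"
  proof -
    have "x - e = 2 *\<^sub>R (e' - e) + (x - p)" unfolding x_def p_def by (simp add: algebra_simps scaleR_2)
    then have "norm (x - e) \<le> 2 * dist e' e + 2 * l * norm (c - e')"
      using norm_triangle_ineq[of "2 *\<^sub>R (e' - e)" "x - p"] l unfolding xp dist_norm by simp
    then show ?thesis using near lK by linarith
  qed
  moreover have "(1/2) *\<^sub>R (e + x) = w" unfolding x_def by (simp add: algebra_simps)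
  moreover have "relball_in A w (l * r) F"
    unfolding w_def using relball_in_shrink[OF assms(1,3,4) e'F room l] .
  ultimately show ?thesis using \<open>x \<in> A\<close> \<open>x \<notin> F\<close> by auto
qed

lemma shrinking_partner_sequence:
  fixes A F :: "'a::real_normed_vector set"
  assumes "e \<in> F"
    and partner: "\<And>d. d > 0 \<Longrightarrow> \<exists>x s. x \<in> A \<and> norm (x - e) < d \<and> x \<notin> F \<and>
                                      relball_in A ((1/2) *\<^sub>R (e + x)) s F"
  shows "\<exists>(X::nat \<Rightarrow> 'a) s. \<forall>k. X k \<in> A \<and> X k \<notin> F \<and> relball_in A ((1/2) *\<^sub>R (e + X k)) (s k) F \<and>
           (\<forall>j<k. norm (X k - e) < 2 * s j \<and> norm (X k - e) < norm (X j - e))"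
proof -
  define good where "good d x s \<longleftrightarrow> x \<in> A \<and> norm (x - e) < d \<and> x \<notin> F \<and>
                                    relball_in A ((1/2) *\<^sub>R (e + x)) s F" for d x s
  obtain xf sf where good: "\<And>d. d > 0 \<Longrightarrow> good d (xf d) (sf d)"
    using partner unfolding good_def by metis
  define D where "D = rec_nat 1 (\<lambda>_ d. min d (min (2 * sf d) (norm (xf d - e))))"
  have D_Suc: "D (Suc k) = min (D k) (min (2 * sf (D k)) (norm (xf (D k) - e)))" for k
    unfolding D_def by simp
  have D_pos: "D k > 0" for k
  proof (induction k)
    case 0 then show ?case unfolding D_def by simp
  next
    case (Suc k)
    then have "good (D k) (xf (D k)) (sf (D k))" by (rule good)
    then show ?case unfolding D_Suc good_def relball_in_def using Suc \<open>e \<in> F\<close> by auto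
  qed
  have D_antimono: "j \<le> k \<Longrightarrow> D k \<le> D j" for j k
    by (rule lift_Suc_antimono_le[of D]) (auto simp: D_Suc)
  define X where "X k = xf (D k)" for k
  define s where "s k = sf (D k)" for k
  have X: "good (D k) (X k) (s k)" for k unfolding X_def s_def using good D_pos by blast
  have "norm (X k - e) < 2 * s j \<and> norm (X k - e) < norm (X j - e)" if "j < k" for j k
  proof -
    have "norm (X k - e) < D k" using X unfolding good_def by blast
    also have "D k \<le> D (Suc j)" using that by (intro D_antimono) simp
    finally show ?thesis unfolding D_Suc X_def s_def by simp
  qed
  then show ?thesis using X unfolding good_def by blast
qed

text \<open>For such a sequence and \<open>j < k\<close>, the midpoint \<open>(X j + X k)/2\<close> is within half of
  \<open>norm (X k - e)\<close>, hence within the radius, of \<open>(e + X j)/2\<close>; so all pairwise midpoints lie in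
  \<open>F\<close>, and the sequence is injective.\<close>
lemma pairwise_midpoints_sequence:
  fixes A F :: "'a::real_normed_vector set"
  assumes "affine A" and "F \<subseteq> A" and "e \<in> F"
    and partner: "\<And>d. d > 0 \<Longrightarrow> \<exists>x s. x \<in> A \<and> norm (x - e) < d \<and> x \<notin> F \<and>
                                      relball_in A ((1/2) *\<^sub>R (e + x)) s F"
  shows "\<exists>X::nat \<Rightarrow> 'a. inj X \<and> (\<forall>k. X k \<notin> F \<and> (1/2) *\<^sub>R (e + X k) \<in> F) \<and>
           (\<forall>j k. j \<noteq> k \<longrightarrow> (1/2) *\<^sub>R (X j + X k) \<in> F)"
proof -
  obtain X :: "nat \<Rightarrow> 'a" and s where XA: "\<And>k. X k \<in> A" and out: "\<And>k. X k \<notin> F"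
    and room: "\<And>k. relball_in A ((1/2) *\<^sub>R (e + X k)) (s k) F"
    and later: "\<And>j k. j < k \<Longrightarrow> norm (X k - e) < 2 * s j \<and> norm (X k - e) < norm (X j - e)"
    using shrinking_partner_sequence[of e F A, OF \<open>e \<in> F\<close> partner] by blast
  have mid: "(1/2) *\<^sub>R (X j + X k) \<in> F" if "j < k" for j k
  proof -
    have "(1/2) *\<^sub>R (X j + X k) = (1 - 1/2) *\<^sub>R X j + (1/2) *\<^sub>R X k" by (simp add: algebra_simps)
    then have "(1/2) *\<^sub>R (X j + X k) \<in> A" using \<open>affine A\<close> XA unfolding affine_alt by metis
    moreover have "(1/2) *\<^sub>R (X j + X k) - (1/2) *\<^sub>R (e + X j) = (1/2) *\<^sub>R (X k - e)"
      by (simp add: algebra_simps)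
    then have "norm ((1/2) *\<^sub>R (X j + X k) - (1/2) *\<^sub>R (e + X j)) < s j"
      using later[OF that] by simp
    ultimately show ?thesis using room[of j] unfolding relball_in_def by blast
  qed
  have "inj X"
  proof (rule injI)
    fix j k assume "X j = X k"
    then show "j = k" using later[of j k] later[of k j] by (cases j k rule: linorder_cases) auto
  qed
  moreover have "(1/2) *\<^sub>R (e + X k) \<in> F" for k
  proof -
    have "(1/2) *\<^sub>R (e + X k) = (1 - 1/2) *\<^sub>R e + (1/2) *\<^sub>R X k" by (simp add: algebra_simps)
    then have "(1/2) *\<^sub>R (e + X k) \<in> A"
      using \<open>affine A\<close> \<open>F \<subseteq> A\<close> \<open>e \<in> F\<close> XA unfolding affine_alt by (metis subsetD)
    then show ?thesis using room[of k] unfolding relball_in_def by simp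
  qed
  moreover have "(1/2) *\<^sub>R (X j + X k) \<in> F" if "j \<noteq> k" for j k
    using mid[of j k] mid[of k j] that by (cases j k rule: linorder_cases) (auto simp: add.commute)
  ultimately show ?thesis using out by blast
qed

text \<open>Such a sequence for a face of the unit ball lying on the sphere is an M-set: midpoints
  are in \<open>F\<close>, and a term inside the ball would force it into \<open>F\<close> by the face property.\<close>
lemma M_set_from_sequence:
  fixes F :: "'a::real_normed_vector set" and X :: "nat \<Rightarrow> 'a"
  assumes face: "F face_of cball 0 1" and sphere: "\<And>p. p \<in> F \<Longrightarrow> norm p = 1" and "e \<in> F"
    and out: "\<And>k. X k \<notin> F" and mid_e: "\<And>k. (1/2) *\<^sub>R (e + X k) \<in> F"
    and mid: "\<And>j k. j \<noteq> k \<Longrightarrow> (1/2) *\<^sub>R (X j + X k) \<in> F"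
  shows "M_set (range X)"
  unfolding M_set_def midpoint_set_def
proof (intro conjI ballI)
  fix m assume "m \<in> {(1/2) *\<^sub>R (x + y) |x y. x \<in> range X \<and> y \<in> range X \<and> x \<noteq> y}"
  then obtain x y where m: "m = (1/2) *\<^sub>R (x + y)" and "x \<in> range X" "y \<in> range X" "x \<noteq> y"
    by blast
  then obtain j k where "x = X j" "y = X k" "j \<noteq> k" by auto
  then have "m \<in> F" using mid m by simp
  then show "norm m = 1" by (rule sphere)
next
  fix y assume "y \<in> range X"
  then obtain k where y: "y = X k" by blast
  show "norm y > 1"
  proof (rule ccontr)
    assume "\<not> norm y > 1"
    then have "y \<in> cball 0 1" by simp
    moreover have "e \<in> cball 0 1" using \<open>e \<in> F\<close> face face_of_imp_subset by blast
    moreover have "(1/2) *\<^sub>R (e + y) \<in> open_segment e y"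
    proof -
      have "e \<noteq> y" using \<open>e \<in> F\<close> out y by auto
      moreover have "(1/2) *\<^sub>R (e + y) = (1 - 1/2) *\<^sub>R e + (1/2) *\<^sub>R y" by (simp add: algebra_simps)
      ultimately show ?thesis by (auto simp: in_segment intro!: exI[of _ "1/2"])
    qed
    ultimately have "y \<in> F" using face_ofD[OF face] mid_e y by blast
    then show False using out y by simp
  qed
qed

theorem theorem2:
  fixes F :: "'a::real_normed_vector set"
  assumes "minkowski_space TYPE('a)"
    and "F face_of cball 0 1"
    and "F \<noteq> {}" and "F \<noteq> cball 0 1"
    and "\<not> polytope F"
  shows "\<exists>S::'a set. infinite S \<and> M_set S"
proof -
  obtain B :: "'a set" where "finite_basis B" using minkowski_space_finite_basis assms(1) by blast
  then interpret finite_basis B .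
  have sphere: "\<And>p. p \<in> F \<Longrightarrow> norm p = 1" using face_of_unit_ball_in_sphere assms(2,4) by blast
  have cvx: "convex F" using assms(2) face_of_imp_convex by blast
  obtain A c r where A: "affine A" "F \<subseteq> A" "c \<in> F" and room: "relball_in A c r F"
    using relative_interior_ball_exists[OF cvx assms(3)] by blast
  have "closed F" by (rule closed_face_with_relball[OF closed_cball bounded_cball assms(2) A room])
  then have "compact F"
    using compact_if_bounded_closed bounded_subset[OF bounded_cball face_of_imp_subset[OF assms(2)]]
    by blast
  then have "infinite {x. x extreme_point_of F}"
    using polytope_if_finite_extreme_points cvx assms(5) by blast
  moreover have "{x. x extreme_point_of F} \<subseteq> F" unfolding extreme_point_of_def by blast
  ultimately obtain e where "e \<in> F" and e: "e islimpt {x. x extreme_point_of F}"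
    using Heine_Borel_imp_Bolzano_Weierstrass[OF \<open>compact F\<close>] by metis
  then obtain X :: "nat \<Rightarrow> 'a" where "inj X" and "\<forall>k. X k \<notin> F \<and> (1/2) *\<^sub>R (e + X k) \<in> F"
    and "\<forall>j k. j \<noteq> k \<longrightarrow> (1/2) *\<^sub>R (X j + X k) \<in> F"
    using pairwise_midpoints_sequence[OF A(1,2) \<open>e \<in> F\<close>
        exists_partner_near[OF cvx \<open>closed F\<close> A room \<open>e \<in> F\<close> e]] by blast
  then have "M_set (range X)" using M_set_from_sequence[OF assms(2) sphere \<open>e \<in> F\<close>] by blast
  then show ?thesis using range_inj_infinite[OF \<open>inj X\<close>] by blast
qed

end
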